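(* Let $n,k\in\mathbb N$ and let $G=(V,E)$ be a connected $n$-quasitransitive graph with all degrees at most $k$. Then there exist a connected vertex-transitive graph $G'=(V',E')$ with all degrees at most $(k+1)^{2n}$ and $\operatorname{diam}(G')\le\operatorname{diam}(G)$, and an injective $(2n,n)$-rough isometry $G'\to G$ (i.e. from $V'$ to $V$). Moreover, if $G$ is finite then one may additionally require $|V|/n\le|V'|\le|V|$.
   Context: $G$ is $n$-quasitransitive if $\mathrm{Aut}(G)$ acting on $V$ has at most $n$ orbits. With $d$ the graph distance on each graph, a map $\phi:V'\to V$ is an $(\alpha,\beta)$-rough isometry if $\alpha^{-1}d(x,y)-\beta\le d(\phi(x),\phi(y))\le\alpha d(x,y)+\beta$ for all $x,y\in V'$, and for every $y\in V$ there is $x\in V'$ with $d(\phi(x),y)\le\beta$. *)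

theory Defs
  imports Main "HOL-Library.Extended_Nat"
begin

definition graph :: "'a set \<Rightarrow> ('a \<Rightarrow> 'a \<Rightarrow> bool) \<Rightarrow> bool" where
  "graph V E \<longleftrightarrow> (\<forall>x y. E x y \<longrightarrow> x \<in> V \<and> y \<in> V \<and> E y x \<and> x \<noteq> y)"

definition edge_rel :: "'a set \<Rightarrow> ('a \<Rightarrow> 'a \<Rightarrow> bool) \<Rightarrow> ('a \<times> 'a) set" where
  "edge_rel V E = {(x, y). x \<in> V \<and> y \<in> V \<and> E x y}"

text \<open>Graph distance: length of a shortest path (meaningful for connected graphs).\<close>
definition gdist :: "'a set \<Rightarrow> ('a \<Rightarrow> 'a \<Rightarrow> bool) \<Rightarrow> 'a \<Rightarrow> 'a \<Rightarrow> nat" where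
  "gdist V E x y = (LEAST m. (x, y) \<in> (edge_rel V E) ^^ m)"

definition connected_graph :: "'a set \<Rightarrow> ('a \<Rightarrow> 'a \<Rightarrow> bool) \<Rightarrow> bool" where
  "connected_graph V E \<longleftrightarrow> V \<noteq> {} \<and> (\<forall>x\<in>V. \<forall>y\<in>V. (x, y) \<in> (edge_rel V E)\<^sup>*)"

definition gdiam :: "'a set \<Rightarrow> ('a \<Rightarrow> 'a \<Rightarrow> bool) \<Rightarrow> enat" where
  "gdiam V E = (SUP x\<in>V. SUP y\<in>V. enat (gdist V E x y))"

definition max_degree_le :: "'a set \<Rightarrow> ('a \<Rightarrow> 'a \<Rightarrow> bool) \<Rightarrow> nat \<Rightarrow> bool" where
  "max_degree_le V E k \<longleftrightarrow> (\<forall>v\<in>V. finite {w\<in>V. E v w} \<and> card {w\<in>V. E v w} \<le> k)"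

definition graph_aut :: "'a set \<Rightarrow> ('a \<Rightarrow> 'a \<Rightarrow> bool) \<Rightarrow> ('a \<Rightarrow> 'a) \<Rightarrow> bool" where
  "graph_aut V E \<sigma> \<longleftrightarrow> bij_betw \<sigma> V V \<and> (\<forall>x\<in>V. \<forall>y\<in>V. E x y \<longleftrightarrow> E (\<sigma> x) (\<sigma> y))"

definition aut_orbit :: "'a set \<Rightarrow> ('a \<Rightarrow> 'a \<Rightarrow> bool) \<Rightarrow> 'a \<Rightarrow> 'a set" where
  "aut_orbit V E v = {\<sigma> v | \<sigma>. graph_aut V E \<sigma>}"

definition quasitransitive :: "nat \<Rightarrow> 'a set \<Rightarrow> ('a \<Rightarrow> 'a \<Rightarrow> bool) \<Rightarrow> bool" where
  "quasitransitive n V E \<longleftrightarrow> finite (aut_orbit V E ` V) \<and> card (aut_orbit V E ` V) \<le> n"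

definition vertex_transitive :: "'a set \<Rightarrow> ('a \<Rightarrow> 'a \<Rightarrow> bool) \<Rightarrow> bool" where
  "vertex_transitive V E \<longleftrightarrow> (\<forall>x\<in>V. \<forall>y\<in>V. \<exists>\<sigma>. graph_aut V E \<sigma> \<and> \<sigma> x = y)"

definition rough_isometry ::
  "'b set \<Rightarrow> ('b \<Rightarrow> 'b \<Rightarrow> bool) \<Rightarrow> 'a set \<Rightarrow> ('a \<Rightarrow> 'a \<Rightarrow> bool) \<Rightarrow> ('b \<Rightarrow> 'a) \<Rightarrow> real \<Rightarrow> real \<Rightarrow> bool" where
  "rough_isometry V' E' V E \<phi> \<alpha> \<beta> \<longleftrightarrow>
     \<phi> ` V' \<subseteq> V \<and>
     (\<forall>x\<in>V'. \<forall>y\<in>V'.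
        inverse \<alpha> * real (gdist V' E' x y) - \<beta> \<le> real (gdist V E (\<phi> x) (\<phi> y)) \<and>
        real (gdist V E (\<phi> x) (\<phi> y)) \<le> \<alpha> * real (gdist V' E' x y) + \<beta>) \<and>
     (\<forall>y\<in>V. \<exists>x\<in>V'. real (gdist V E (\<phi> x) y) \<le> \<beta>)"

end

theory Submission
  imports Defs
begin

text \<open>Take an orbit \<open>A\<close> of \<open>Aut(G)\<close> of maximal size and join two of its points when their
  distance in \<open>G\<close> is at most \<open>2n - 1\<close>. Automorphisms of \<open>G\<close> map \<open>A\<close> onto itself and preserve
  distances, so they act transitively on this graph, and neighbours lie in a ball of radius
  \<open>2n - 1\<close> of \<open>G\<close>, which bounds the degree. Every vertex of \<open>G\<close> is within distance \<open>n - 1\<close>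
  of \<open>A\<close>: along a geodesic from a vertex at distance \<open>d\<close> from \<open>A\<close> the distance to \<open>A\<close>
  takes all values \<open>0, \<dots>, d\<close>, and it is constant on orbits, so \<open>d < n\<close>. Therefore
  projecting a path of \<open>G\<close> between points of \<open>A\<close> to nearby points of \<open>A\<close> gives a path of the
  new graph of no greater length, and the inclusion of \<open>A\<close> is the rough isometry.
  Maximality of \<open>A\<close> gives \<open>|V| \<le> n |A|\<close>.\<close>

subsection \<open>Graph distance\<close>

lemma edge_rel_iff [simp]: "(x, y) \<in> edge_rel V E \<longleftrightarrow> x \<in> V \<and> y \<in> V \<and> E x y"
  by (simp add: edge_rel_def)

lemma graph_sym: "graph V E \<Longrightarrow> E x y \<Longrightarrow> E y x"
  unfolding graph_def by blast

lemma edge_rel_relpow_in_V: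
  assumes "(x, y) \<in> edge_rel V E ^^ m" and "x \<in> V"
  shows "y \<in> V"
  using assms by (cases m) (auto elim: relpow_Suc_E)

lemma edge_rel_relpow_sym:
  assumes "graph V E" and "(x, y) \<in> edge_rel V E ^^ m"
  shows "(y, x) \<in> edge_rel V E ^^ m"
  using assms(2)
proof (induction m arbitrary: y)
  case (Suc m)
  then obtain z where "(x, z) \<in> edge_rel V E ^^ m" and "(z, y) \<in> edge_rel V E"
    by (auto elim: relpow_Suc_E)
  moreover from this(2) have "(y, z) \<in> edge_rel V E"
    by (auto intro: graph_sym[OF assms(1)])
  ultimately show ?case
    using Suc.IH by (blast intro: relpow_Suc_I2)
qed simp

lemma gdist_relpow:
  assumes "connected_graph V E" and "x \<in> V" and "y \<in> V"
  shows "(x, y) \<in> edge_rel V E ^^ gdist V E x y"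
proof -
  have "\<exists>m. (x, y) \<in> edge_rel V E ^^ m"
    using assms by (auto simp: connected_graph_def rtrancl_power)
  then show ?thesis
    unfolding gdist_def by (rule LeastI_ex)
qed

lemma gdist_le: "(x, y) \<in> edge_rel V E ^^ m \<Longrightarrow> gdist V E x y \<le> m"
  unfolding gdist_def by (rule Least_le)

lemma gdist_refl [simp]: "gdist V E x x = 0"
  using gdist_le[where m=0 and x=x and y=x and V=V and E=E] by simp

lemma gdist_le_1_if_edge: "x \<in> V \<Longrightarrow> y \<in> V \<Longrightarrow> E x y \<Longrightarrow> gdist V E x y \<le> 1"
  using gdist_le[where m=1 and x=x and y=y and V=V and E=E] by simp

lemma gdist_commute:
  assumes "graph V E" and "connected_graph V E" and "x \<in> V" and "y \<in> V"
  shows "gdist V E x y = gdist V E y x"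
proof -
  have le: "gdist V E a b \<le> gdist V E b a" if "a \<in> V" and "b \<in> V" for a b
    using gdist_le[OF edge_rel_relpow_sym[OF assms(1) gdist_relpow[OF assms(2) that(2,1)]]] .
  show ?thesis
    using assms(3,4) by (intro antisym le)
qed

lemma gdist_triangle:
  assumes "connected_graph V E" and "x \<in> V" and "y \<in> V" and "z \<in> V"
  shows "gdist V E x z \<le> gdist V E x y + gdist V E y z"
proof -
  have "(x, z) \<in> edge_rel V E ^^ (gdist V E x y + gdist V E y z)"
    unfolding relpow_add using assms by (blast intro: gdist_relpow)
  then show ?thesis
    by (rule gdist_le)
qed

subsection \<open>Automorphisms and orbits\<close>

lemma graph_aut_bij_betw: "graph_aut V E \<sigma> \<Longrightarrow> bij_betw \<sigma> V V"
  by (simp add: graph_aut_def)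

lemma graph_aut_edge_iff:
  "graph_aut V E \<sigma> \<Longrightarrow> x \<in> V \<Longrightarrow> y \<in> V \<Longrightarrow> E (\<sigma> x) (\<sigma> y) \<longleftrightarrow> E x y"
  by (simp add: graph_aut_def)

lemma graph_aut_in_V: "graph_aut V E \<sigma> \<Longrightarrow> x \<in> V \<Longrightarrow> \<sigma> x \<in> V"
  using graph_aut_bij_betw bij_betwE by blast

lemma graph_aut_inj_on: "graph_aut V E \<sigma> \<Longrightarrow> inj_on \<sigma> V"
  using graph_aut_bij_betw bij_betw_imp_inj_on by blast

lemma graph_aut_image_eq: "graph_aut V E \<sigma> \<Longrightarrow> \<sigma> ` V = V"
  using graph_aut_bij_betw bij_betw_imp_surj_on by blast

lemma graph_aut_id: "graph_aut V E id"
  by (simp add: graph_aut_def)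

lemma graph_aut_comp:
  assumes "graph_aut V E \<sigma>" and "graph_aut V E \<tau>"
  shows "graph_aut V E (\<sigma> \<circ> \<tau>)"
  unfolding graph_aut_def
  using assms graph_aut_in_V[OF assms(2)]
    graph_aut_edge_iff[OF assms(1)] graph_aut_edge_iff[OF assms(2)]
  by (auto intro: bij_betw_trans graph_aut_bij_betw)

lemma graph_aut_inv_into:
  assumes "graph_aut V E \<sigma>"
  shows "graph_aut V E (inv_into V \<sigma>)"
proof -
  have bij: "bij_betw (inv_into V \<sigma>) V V"
    using bij_betw_inv_into[OF graph_aut_bij_betw[OF assms]] .
  have inv: "\<sigma> (inv_into V \<sigma> x) = x" if "x \<in> V" for x
    using that graph_aut_image_eq[OF assms] by (simp add: f_inv_into_f)
  have "E (inv_into V \<sigma> x) (inv_into V \<sigma> y) \<longleftrightarrow> E x y" if "x \<in> V" "y \<in> V" for x y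
    using graph_aut_edge_iff[OF assms bij_betw_apply[OF bij that(1)] bij_betw_apply[OF bij that(2)]]
    by (simp add: inv that)
  then show ?thesis
    using bij by (simp add: graph_aut_def)
qed

lemma graph_aut_relpow_iff:
  assumes "graph_aut V E \<sigma>" and "x \<in> V" and "y \<in> V"
  shows "(\<sigma> x, \<sigma> y) \<in> edge_rel V E ^^ m \<longleftrightarrow> (x, y) \<in> edge_rel V E ^^ m"
  using assms(3)
proof (induction m arbitrary: y)
  case 0
  then show ?case
    using assms(2) inj_on_eq_iff[OF graph_aut_inj_on[OF assms(1)]] by auto
next
  case (Suc m)
  note im = graph_aut_image_eq[OF assms(1)] and edges = graph_aut_edge_iff[OF assms(1)]
  show ?case
  proof
    assume "(\<sigma> x, \<sigma> y) \<in> edge_rel V E ^^ Suc m"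
    then obtain w where w: "(\<sigma> x, w) \<in> edge_rel V E ^^ m" "(w, \<sigma> y) \<in> edge_rel V E"
      by (rule relpow_Suc_E)
    then obtain z where "z \<in> V" and "w = \<sigma> z"
      using im by (metis edge_rel_iff imageE)
    with w Suc edges have "(x, z) \<in> edge_rel V E ^^ m" and "(z, y) \<in> edge_rel V E"
      by auto
    then show "(x, y) \<in> edge_rel V E ^^ Suc m"
      by (rule relpow_Suc_I)
  next
    assume "(x, y) \<in> edge_rel V E ^^ Suc m"
    then obtain z where z: "(x, z) \<in> edge_rel V E ^^ m" "(z, y) \<in> edge_rel V E"
      by (rule relpow_Suc_E)
    with Suc edges graph_aut_in_V[OF assms(1)]
    have "(\<sigma> x, \<sigma> z) \<in> edge_rel V E ^^ m" and "(\<sigma> z, \<sigma> y) \<in> edge_rel V E"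
      by auto
    then show "(\<sigma> x, \<sigma> y) \<in> edge_rel V E ^^ Suc m"
      by (rule relpow_Suc_I)
  qed
qed

lemma graph_aut_gdist:
  assumes "graph_aut V E \<sigma>" and "x \<in> V" and "y \<in> V"
  shows "gdist V E (\<sigma> x) (\<sigma> y) = gdist V E x y"
  unfolding gdist_def using graph_aut_relpow_iff[OF assms] by simp

lemma self_in_aut_orbit: "x \<in> aut_orbit V E x"
proof -
  have "x = id x \<and> graph_aut V E id"
    by (simp add: graph_aut_id)
  then show ?thesis
    unfolding aut_orbit_def by blast
qed

lemma aut_orbit_subset: "x \<in> V \<Longrightarrow> aut_orbit V E x \<subseteq> V"
  by (auto simp: aut_orbit_def graph_aut_in_V)

lemma aut_orbit_closed:
  assumes "graph_aut V E \<sigma>" and "y \<in> aut_orbit V E x"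
  shows "\<sigma> y \<in> aut_orbit V E x"
proof -
  obtain \<tau> where "graph_aut V E \<tau>" and "y = \<tau> x"
    using assms(2) unfolding aut_orbit_def by blast
  then have "graph_aut V E (\<sigma> \<circ> \<tau>)" and "\<sigma> y = (\<sigma> \<circ> \<tau>) x"
    using graph_aut_comp[OF assms(1)] by auto
  then show ?thesis
    unfolding aut_orbit_def by blast
qed

lemma aut_orbit_transitive:
  assumes "x \<in> V" and "y \<in> aut_orbit V E x" and "z \<in> aut_orbit V E x"
  shows "\<exists>\<sigma>. graph_aut V E \<sigma> \<and> \<sigma> y = z"
proof -
  obtain \<tau> \<rho> where \<tau>: "graph_aut V E \<tau>" "y = \<tau> x" and \<rho>: "graph_aut V E \<rho>" "z = \<rho> x"
    using assms(2,3) unfolding aut_orbit_def by blast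
  have "(\<rho> \<circ> inv_into V \<tau>) y = z"
    using \<tau> \<rho>(2) inv_into_f_f[OF graph_aut_inj_on[OF \<tau>(1)] assms(1)] by simp
  then show ?thesis
    using graph_aut_comp[OF \<rho>(1) graph_aut_inv_into[OF \<tau>(1)]] by blast
qed

lemma aut_orbit_image_eq:
  assumes "graph_aut V E \<sigma>" and "x \<in> V"
  shows "\<sigma> ` aut_orbit V E x = aut_orbit V E x"
proof
  show "\<sigma> ` aut_orbit V E x \<subseteq> aut_orbit V E x"
    using aut_orbit_closed[OF assms(1)] by blast
  show "aut_orbit V E x \<subseteq> \<sigma> ` aut_orbit V E x"
  proof
    fix z assume z: "z \<in> aut_orbit V E x"
    then have "z = \<sigma> (inv_into V \<sigma> z)"
      using aut_orbit_subset[OF assms(2)] graph_aut_image_eq[OF assms(1)]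
      by (simp add: f_inv_into_f subset_iff)
    moreover have "inv_into V \<sigma> z \<in> aut_orbit V E x"
      using aut_orbit_closed[OF graph_aut_inv_into[OF assms(1)] z] .
    ultimately show "z \<in> \<sigma> ` aut_orbit V E x"
      by blast
  qed
qed

lemma quasitransitive_pos:
  assumes "quasitransitive n V E" and "V \<noteq> {}"
  shows "0 < n"
proof -
  have "aut_orbit V E ` V \<noteq> {}" and "finite (aut_orbit V E ` V)"
    using assms by (auto simp: quasitransitive_def)
  then have "0 < card (aut_orbit V E ` V)"
    by (simp add: card_gt_0_iff)
  then show ?thesis
    using assms(1) by (simp add: quasitransitive_def)
qed

lemma exists_aut_orbit_max_card:
  assumes "quasitransitive n V E" and "V \<noteq> {}"
  obtains x where "x \<in> V" and "\<And>w. w \<in> V \<Longrightarrow> card (aut_orbit V E w) \<le> card (aut_orbit V E x)"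
proof -
  have fin: "finite (card ` aut_orbit V E ` V)"
    using assms(1) by (simp add: quasitransitive_def)
  then have "Max (card ` aut_orbit V E ` V) \<in> card ` aut_orbit V E ` V"
    using assms(2) by (intro Max_in) auto
  then obtain x where "x \<in> V" and "card (aut_orbit V E x) = Max (card ` aut_orbit V E ` V)"
    by auto
  then show ?thesis
    using that fin by (simp add: Max_ge)
qed

lemma card_le_mult_card_aut_orbits:
  assumes "finite V" and "quasitransitive n V E" and "\<And>w. w \<in> V \<Longrightarrow> card (aut_orbit V E w) \<le> m"
  shows "card V \<le> n * m"
proof -
  have "V \<subseteq> \<Union> (aut_orbit V E ` V)"
    using self_in_aut_orbit by fast
  moreover have "\<Union> (aut_orbit V E ` V) \<subseteq> V"
    using aut_orbit_subset by fast
  ultimately have "card V = card (\<Union> (aut_orbit V E ` V))"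
    by (simp add: subset_antisym)
  also have "\<dots> \<le> (\<Sum>w\<in>aut_orbit V E ` V. card w)"
    by (rule card_Union_le_sum_card)
  also have "\<dots> \<le> card (aut_orbit V E ` V) * m"
    using sum_bounded_above[of "aut_orbit V E ` V" card m] assms(3) by auto
  also have "\<dots> \<le> n * m"
    using assms(2) by (simp add: quasitransitive_def)
  finally show ?thesis .
qed

lemma less_if_inj_on_aut_orbits:
  assumes "quasitransitive n V E" and "\<And>i. i \<le> d \<Longrightarrow> p i \<in> V"
    and "inj_on (\<lambda>i. aut_orbit V E (p i)) {..d}"
  shows "d < n"
proof -
  have "d + 1 = card ((\<lambda>i. aut_orbit V E (p i)) ` {..d})"
    using assms(3) by (simp add: card_image)
  also have "\<dots> \<le> card (aut_orbit V E ` V)"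
    using assms(1,2) by (intro card_mono) (auto simp: quasitransitive_def)
  also have "\<dots> \<le> n"
    using assms(1) by (simp add: quasitransitive_def)
  finally show ?thesis
    by simp
qed

subsection \<open>Balls and distance to a set\<close>

definition gball :: "'a set \<Rightarrow> ('a \<Rightarrow> 'a \<Rightarrow> bool) \<Rightarrow> 'a \<Rightarrow> nat \<Rightarrow> 'a set" where
  "gball V E v r = {w. \<exists>j\<le>r. (v, w) \<in> edge_rel V E ^^ j}"

lemma gball_0 [simp]: "gball V E v 0 = {v}"
  by (auto simp: gball_def)

lemma gball_Suc_subset:
  "gball V E v (Suc r) \<subseteq> (\<Union>z\<in>gball V E v r. insert z {w\<in>V. E z w})"
proof
  fix w assume "w \<in> gball V E v (Suc r)"
  then obtain j where j: "j \<le> Suc r" "(v, w) \<in> edge_rel V E ^^ j"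
    by (auto simp: gball_def)
  show "w \<in> (\<Union>z\<in>gball V E v r. insert z {w\<in>V. E z w})"
  proof (cases "j \<le> r")
    case True
    then have "w \<in> gball V E v r"
      using j(2) by (auto simp: gball_def)
    then show ?thesis
      by blast
  next
    case False
    with j have "(v, w) \<in> edge_rel V E ^^ Suc r"
      by (simp add: le_Suc_eq)
    then obtain z where "(v, z) \<in> edge_rel V E ^^ r" and "(z, w) \<in> edge_rel V E"
      by (rule relpow_Suc_E)
    then show ?thesis
      by (auto simp: gball_def)
  qed
qed

lemma gball_finite_card_le:
  assumes "max_degree_le V E k" and "v \<in> V"
  shows "finite (gball V E v r) \<and> card (gball V E v r) \<le> (k + 1) ^ r"
proof (induction r)
  case (Suc r)
  define B where "B = gball V E v r"
  define N where "N z = insert z {w\<in>V. E z w}" for z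
  have fin_B: "finite B" and card_B: "card B \<le> (k + 1) ^ r"
    using Suc.IH by (simp_all add: B_def)
  have N_bound: "finite (N z) \<and> card (N z) \<le> k + 1" if "z \<in> B" for z
  proof -
    have "z \<in> V"
      using that assms(2) edge_rel_relpow_in_V by (auto simp: B_def gball_def)
    then have "finite {w\<in>V. E z w}" and "card {w\<in>V. E z w} \<le> k"
      using assms(1) by (auto simp: max_degree_le_def)
    then show ?thesis
      by (simp add: N_def card_insert_if)
  qed
  have fin_UN: "finite (\<Union>z\<in>B. N z)"
    using fin_B N_bound by blast
  have "card (\<Union>z\<in>B. N z) \<le> card B * (k + 1)"
    using N_bound card_UN_le[OF fin_B, of N] sum_mono[of B "\<lambda>z. card (N z)" "\<lambda>_. k + 1"]
    by auto
  also have "\<dots> \<le> (k + 1) ^ r * (k + 1)"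
    using card_B by (rule mult_right_mono) simp
  also have "\<dots> = (k + 1) ^ Suc r"
    by (rule power_Suc2[symmetric])
  finally show ?case
    using gball_Suc_subset[of V E v r] card_mono[OF fin_UN] finite_subset[OF _ fin_UN]
    unfolding B_def N_def by (meson order_trans)
qed simp

definition gdist_set :: "'a set \<Rightarrow> ('a \<Rightarrow> 'a \<Rightarrow> bool) \<Rightarrow> 'a \<Rightarrow> 'a set \<Rightarrow> nat" where
  "gdist_set V E x A = (LEAST m. \<exists>u\<in>A. gdist V E x u = m)"

lemma gdist_set_attained:
  assumes "A \<noteq> {}"
  obtains u where "u \<in> A" and "gdist V E x u = gdist_set V E x A"
proof -
  obtain u where "u \<in> A"
    using assms by blast
  then have "\<exists>u\<in>A. gdist V E x u = gdist_set V E x A"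
    unfolding gdist_set_def by (intro LeastI_ex[of "\<lambda>m. \<exists>u\<in>A. gdist V E x u = m"]) auto
  then show ?thesis
    using that by blast
qed

lemma gdist_set_le: "u \<in> A \<Longrightarrow> gdist_set V E x A \<le> gdist V E x u"
  unfolding gdist_set_def by (rule Least_le) auto

lemma gdist_set_triangle:
  assumes "connected_graph V E" and "x \<in> V" and "p \<in> V" and "A \<subseteq> V" and "A \<noteq> {}"
  shows "gdist_set V E x A \<le> gdist V E x p + gdist_set V E p A"
proof -
  obtain u where u: "u \<in> A" "gdist V E p u = gdist_set V E p A"
    using gdist_set_attained[OF assms(5)] by metis
  have "gdist_set V E x A \<le> gdist V E x u"
    using u(1) by (rule gdist_set_le)
  also have "\<dots> \<le> gdist V E x p + gdist V E p u"
    using assms u(1) by (intro gdist_triangle) auto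
  finally show ?thesis
    using u(2) by simp
qed

lemma gdist_set_graph_aut_le:
  assumes "graph_aut V E \<sigma>" and "\<sigma> ` A \<subseteq> A" and "A \<subseteq> V" and "A \<noteq> {}" and "x \<in> V"
  shows "gdist_set V E (\<sigma> x) A \<le> gdist_set V E x A"
proof -
  obtain u where u: "u \<in> A" "gdist V E x u = gdist_set V E x A"
    using gdist_set_attained[OF assms(4)] by metis
  have "gdist_set V E (\<sigma> x) A \<le> gdist V E (\<sigma> x) (\<sigma> u)"
    using assms(2) u(1) by (intro gdist_set_le) auto
  also have "\<dots> = gdist V E x u"
    using assms u(1) by (intro graph_aut_gdist) auto
  finally show ?thesis
    using u(2) by simp
qed

lemma gdist_set_aut_orbit_eq:
  assumes "\<And>\<sigma>. graph_aut V E \<sigma> \<Longrightarrow> \<sigma> ` A \<subseteq> A" and "A \<subseteq> V" and "A \<noteq> {}"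
    and "x \<in> V" and "y \<in> aut_orbit V E x"
  shows "gdist_set V E y A = gdist_set V E x A"
proof -
  have y: "y \<in> V"
    using aut_orbit_subset[OF assms(4)] assms(5) by auto
  obtain \<sigma> \<tau> where \<sigma>: "graph_aut V E \<sigma>" "\<sigma> x = y" and \<tau>: "graph_aut V E \<tau>" "\<tau> y = x"
    using aut_orbit_transitive[OF assms(4)] assms(5) self_in_aut_orbit by metis
  show ?thesis
    using gdist_set_graph_aut_le[OF \<sigma>(1) assms(1)[OF \<sigma>(1)] assms(2,3,4)]
      gdist_set_graph_aut_le[OF \<tau>(1) assms(1)[OF \<tau>(1)] assms(2,3) y] \<sigma>(2) \<tau>(2)
    by simp
qed

lemma gdist_split:
  assumes "connected_graph V E" and "x \<in> V" and "y \<in> V" and "i \<le> gdist V E x y"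
  shows "\<exists>p. p \<in> V \<and> gdist V E x p \<le> i \<and> gdist V E p y \<le> gdist V E x y - i"
proof -
  have "(x, y) \<in> edge_rel V E ^^ (i + (gdist V E x y - i))"
    using gdist_relpow[OF assms(1-3)] assms(4) by simp
  then obtain p where "(x, p) \<in> edge_rel V E ^^ i"
    and "(p, y) \<in> edge_rel V E ^^ (gdist V E x y - i)"
    unfolding relpow_add by blast
  then show ?thesis
    using edge_rel_relpow_in_V[OF _ assms(2)] gdist_le by metis
qed

lemma gdist_set_less_card_aut_orbits:
  assumes "connected_graph V E" and "quasitransitive n V E"
    and "\<And>\<sigma>. graph_aut V E \<sigma> \<Longrightarrow> \<sigma> ` A \<subseteq> A" and "A \<subseteq> V" and "A \<noteq> {}" and "v \<in> V"
  shows "gdist_set V E v A < n"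
proof -
  define d where "d = gdist_set V E v A"
  obtain u where u: "u \<in> A" "gdist V E v u = d"
    using gdist_set_attained[OF assms(5)] unfolding d_def by metis
  have "\<forall>i\<in>{..d}. \<exists>p. p \<in> V \<and> gdist V E v p \<le> i \<and> gdist V E p u \<le> d - i"
    using gdist_split[OF assms(1,6)] u assms(4) by auto
  then obtain p where p: "\<And>i. i \<le> d \<Longrightarrow> p i \<in> V \<and> gdist V E v (p i) \<le> i \<and> gdist V E (p i) u \<le> d - i"
    using bchoice[of "{..d}"] by (metis atMost_iff)
  have dist_p: "gdist_set V E (p i) A = d - i" if "i \<le> d" for i
  proof (rule antisym)
    show "gdist_set V E (p i) A \<le> d - i"
      using gdist_set_le[OF u(1), of V E "p i"] p[OF that] by linarith
    show "d - i \<le> gdist_set V E (p i) A"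
      using gdist_set_triangle[OF assms(1,6) _ assms(4,5), of "p i"] p[OF that]
      unfolding d_def by linarith
  qed
  have "inj_on (\<lambda>i. aut_orbit V E (p i)) {..d}"
  proof (rule inj_onI)
    fix i j assume ij: "i \<in> {..d}" "j \<in> {..d}" "aut_orbit V E (p i) = aut_orbit V E (p j)"
    then have "p j \<in> aut_orbit V E (p i)"
      using self_in_aut_orbit by metis
    then have "gdist_set V E (p j) A = gdist_set V E (p i) A"
      using gdist_set_aut_orbit_eq[OF assms(3-5)] p ij(1) by auto
    then show "i = j"
      using dist_p ij(1,2) by auto
  qed
  then show ?thesis
    using less_if_inj_on_aut_orbits[OF assms(2)] p unfolding d_def by blast
qed

lemma aut_orbit_dense:
  assumes "graph V E" and "connected_graph V E" and "quasitransitive n V E" and "x \<in> V" and "v \<in> V"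
  obtains u where "u \<in> aut_orbit V E x" and "gdist V E u v \<le> n - 1"
proof -
  have closed: "\<sigma> ` aut_orbit V E x \<subseteq> aut_orbit V E x" if "graph_aut V E \<sigma>" for \<sigma>
    using aut_orbit_closed[OF that] by blast
  obtain u where u: "u \<in> aut_orbit V E x" "gdist V E v u = gdist_set V E v (aut_orbit V E x)"
    using gdist_set_attained[of "aut_orbit V E x"] self_in_aut_orbit by (metis empty_iff)
  have "gdist_set V E v (aut_orbit V E x) < n"
  proof (rule gdist_set_less_card_aut_orbits[OF assms(2,3)])
    show "aut_orbit V E x \<noteq> {}"
      using self_in_aut_orbit by (metis empty_iff)
  qed (use closed aut_orbit_subset[OF assms(4)] assms(5) in auto)
  moreover have "gdist V E u v = gdist V E v u"
    using gdist_commute[OF assms(1,2)] u(1) aut_orbit_subset[OF assms(4)] assms(5) by blast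
  ultimately show ?thesis
    using that u by simp
qed

subsection \<open>The distance graph on a subset\<close>

lemma edge_rel_relpow_map:
  assumes "f ` V \<subseteq> W"
    and "\<And>x y. x \<in> V \<Longrightarrow> y \<in> V \<Longrightarrow> E x y \<Longrightarrow> f x = f y \<or> F (f x) (f y)"
    and "(x, y) \<in> edge_rel V E ^^ m"
  shows "\<exists>m'\<le>m. (f x, f y) \<in> edge_rel W F ^^ m'"
  using assms(3)
proof (induction m arbitrary: y)
  case (Suc m)
  then obtain z where "(x, z) \<in> edge_rel V E ^^ m" and zy: "(z, y) \<in> edge_rel V E"
    by (auto elim: relpow_Suc_E)
  then obtain m' where m': "m' \<le> m" "(f x, f z) \<in> edge_rel W F ^^ m'"
    using Suc.IH by blast
  have "f z = f y \<or> (f z, f y) \<in> edge_rel W F"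
    using zy assms(1,2) by auto
  then show ?case
  proof
    assume "f z = f y"
    then show ?thesis
      using m' le_SucI by metis
  next
    assume "(f z, f y) \<in> edge_rel W F"
    then have "(f x, f y) \<in> edge_rel W F ^^ Suc m'"
      using m'(2) by (rule relpow_Suc_I[rotated])
    then show ?thesis
      using m'(1) Suc_le_mono by blast
  qed
qed auto

definition dist_graph :: "'a set \<Rightarrow> ('a \<Rightarrow> 'a \<Rightarrow> bool) \<Rightarrow> 'a set \<Rightarrow> nat \<Rightarrow> 'a \<Rightarrow> 'a \<Rightarrow> bool" where
  "dist_graph V E A r x y \<longleftrightarrow> x \<in> A \<and> y \<in> A \<and> x \<noteq> y \<and> gdist V E x y \<le> r"

lemma graph_dist_graph:
  assumes "graph V E" and "connected_graph V E" and "A \<subseteq> V"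
  shows "graph A (dist_graph V E A r)"
  unfolding graph_def dist_graph_def using gdist_commute[OF assms(1,2)] assms(3) by (metis subsetD)

lemma max_degree_le_mono: "max_degree_le V E k \<Longrightarrow> k \<le> k' \<Longrightarrow> max_degree_le V E k'"
  by (auto simp: max_degree_le_def)

lemma max_degree_le_dist_graph:
  assumes "connected_graph V E" and "max_degree_le V E k" and "A \<subseteq> V"
  shows "max_degree_le A (dist_graph V E A r) ((k + 1) ^ r)"
  unfolding max_degree_le_def
proof
  fix v assume v: "v \<in> A"
  have sub: "{w\<in>A. dist_graph V E A r v w} \<subseteq> gball V E v r"
    using gdist_relpow[OF assms(1)] v assms(3) by (auto simp: gball_def dist_graph_def)
  moreover have "finite (gball V E v r)" and "card (gball V E v r) \<le> (k + 1) ^ r"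
    using gball_finite_card_le[OF assms(2)] v assms(3) by auto
  ultimately show "finite {w\<in>A. dist_graph V E A r v w} \<and>
      card {w\<in>A. dist_graph V E A r v w} \<le> (k + 1) ^ r"
    using card_mono finite_subset le_trans by metis
qed

lemma graph_aut_dist_graph:
  assumes "graph_aut V E \<sigma>" and "\<sigma> ` A = A" and "A \<subseteq> V"
  shows "graph_aut A (dist_graph V E A r) \<sigma>"
proof -
  have inj: "inj_on \<sigma> A"
    using inj_on_subset[OF graph_aut_inj_on[OF assms(1)] assms(3)] .
  have "dist_graph V E A r (\<sigma> x) (\<sigma> y) \<longleftrightarrow> dist_graph V E A r x y" if "x \<in> A" "y \<in> A" for x y
    using that assms graph_aut_gdist[OF assms(1)] inj_on_eq_iff[OF inj]
    by (auto simp: dist_graph_def subset_iff)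
  then show ?thesis
    using inj assms(2) by (auto simp: graph_aut_def bij_betw_def)
qed

lemma vertex_transitive_dist_graph_aut_orbit:
  assumes "x \<in> V"
  shows "vertex_transitive (aut_orbit V E x) (dist_graph V E (aut_orbit V E x) r)"
  unfolding vertex_transitive_def
  using aut_orbit_transitive[OF assms] graph_aut_dist_graph aut_orbit_image_eq[OF _ assms]
    aut_orbit_subset[OF assms] by metis

lemma gdist_le_mult_if_dist_graph_relpow:
  assumes "connected_graph V E" and "A \<subseteq> V" and "x \<in> A"
    and "(x, y) \<in> edge_rel A (dist_graph V E A r) ^^ m"
  shows "gdist V E x y \<le> r * m"
  using assms(4)
proof (induction m arbitrary: y)
  case (Suc m)
  then obtain z where "(x, z) \<in> edge_rel A (dist_graph V E A r) ^^ m"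
    and zy: "(z, y) \<in> edge_rel A (dist_graph V E A r)"
    by (auto elim: relpow_Suc_E)
  then have "gdist V E x z \<le> r * m"
    using Suc.IH by blast
  moreover have "z \<in> A" "y \<in> A" "gdist V E z y \<le> r"
    using zy by (auto simp: dist_graph_def)
  moreover have "gdist V E x y \<le> gdist V E x z + gdist V E z y"
    using gdist_triangle[OF assms(1)] assms(2,3) calculation(2,3) by blast
  ultimately show ?case
    by simp
qed simp

lemma dist_graph_relpow_if_dense:
  assumes "graph V E" and "connected_graph V E" and "A \<subseteq> V"
    and dense: "\<forall>v\<in>V. \<exists>u\<in>A. gdist V E u v \<le> \<rho>" and "2 * \<rho> + 1 \<le> r"
    and "x \<in> A" and "y \<in> A"
  shows "\<exists>m\<le>gdist V E x y. (x, y) \<in> edge_rel A (dist_graph V E A r) ^^ m"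
proof -
  define c where "c v = (if v \<in> A then v else SOME u. u \<in> A \<and> gdist V E u v \<le> \<rho>)" for v
  have c: "c v \<in> A \<and> gdist V E (c v) v \<le> \<rho>" if "v \<in> V" for v
  proof (cases "v \<in> A")
    case False
    have "\<exists>u. u \<in> A \<and> gdist V E u v \<le> \<rho>"
      using dense that by blast
    from someI_ex[OF this] show ?thesis
      using False by (simp add: c_def)
  qed (simp add: c_def)
  have step: "c v = c w \<or> dist_graph V E A r (c v) (c w)" if "v \<in> V" "w \<in> V" "E v w" for v w
  proof -
    have cV: "c v \<in> V" "c w \<in> V"
      using c that(1,2) assms(3) by auto
    have "gdist V E (c v) (c w) \<le> gdist V E (c v) v + gdist V E v (c w)"
      by (rule gdist_triangle[OF assms(2) cV(1) that(1) cV(2)])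
    moreover have "gdist V E v (c w) \<le> gdist V E v w + gdist V E w (c w)"
      by (rule gdist_triangle[OF assms(2) that(1,2) cV(2)])
    moreover have "gdist V E v w \<le> 1"
      using gdist_le_1_if_edge that .
    moreover have "gdist V E w (c w) = gdist V E (c w) w"
      by (rule gdist_commute[OF assms(1,2) that(2) cV(2)])
    ultimately have "gdist V E (c v) (c w) \<le> 2 * \<rho> + 1"
      using c[OF that(1)] c[OF that(2)] by linarith
    then show ?thesis
      using c that(1,2) assms(5) by (auto simp: dist_graph_def)
  qed
  have cA: "c ` V \<subseteq> A"
    using c by auto
  have "(x, y) \<in> edge_rel V E ^^ gdist V E x y"
    using gdist_relpow[OF assms(2)] assms(3,6,7) by auto
  from edge_rel_relpow_map[OF cA step this]
  obtain m where "m \<le> gdist V E x y" and "(c x, c y) \<in> edge_rel A (dist_graph V E A r) ^^ m"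
    by auto
  then show ?thesis
    using assms(6,7) by (auto simp: c_def)
qed

lemma dist_graph_if_dense:
  assumes "graph V E" and "connected_graph V E" and "A \<subseteq> V" and "A \<noteq> {}"
    and "\<forall>v\<in>V. \<exists>u\<in>A. gdist V E u v \<le> \<rho>" and "2 * \<rho> + 1 \<le> r"
  shows "connected_graph A (dist_graph V E A r)"
    and "\<And>x y. x \<in> A \<Longrightarrow> y \<in> A \<Longrightarrow> gdist A (dist_graph V E A r) x y \<le> gdist V E x y"
    and "\<And>x y. x \<in> A \<Longrightarrow> y \<in> A \<Longrightarrow> gdist V E x y \<le> r * gdist A (dist_graph V E A r) x y"
proof -
  note relpow = dist_graph_relpow_if_dense[OF assms(1-3,5,6)]
  have "(x, y) \<in> (edge_rel A (dist_graph V E A r))\<^sup>*" if "x \<in> A" "y \<in> A" for x y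
    using relpow[OF that] unfolding rtrancl_power by auto
  then show conn: "connected_graph A (dist_graph V E A r)"
    using assms(4) by (simp add: connected_graph_def)
  show "gdist A (dist_graph V E A r) x y \<le> gdist V E x y" if xy: "x \<in> A" "y \<in> A" for x y
  proof -
    obtain m where "m \<le> gdist V E x y" and "(x, y) \<in> edge_rel A (dist_graph V E A r) ^^ m"
      using relpow[OF xy] by auto
    then show ?thesis
      using gdist_le[where V=A and E="dist_graph V E A r" and m=m and x=x and y=y] by linarith
  qed
  show "gdist V E x y \<le> r * gdist A (dist_graph V E A r) x y" if "x \<in> A" "y \<in> A" for x y
    using gdist_le_mult_if_dist_graph_relpow[OF assms(2,3) that(1) gdist_relpow[OF conn that]] .
qed

lemma gdiam_le_if_gdist_le:
  assumes "A \<subseteq> V" and "\<And>x y. x \<in> A \<Longrightarrow> y \<in> A \<Longrightarrow> gdist A F x y \<le> gdist V E x y"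
  shows "gdiam A F \<le> gdiam V E"
  unfolding gdiam_def
proof (intro SUP_least)
  fix x y assume "x \<in> A" and "y \<in> A"
  then have "x \<in> V" and "y \<in> V" and "enat (gdist A F x y) \<le> enat (gdist V E x y)"
    using assms by auto
  then show "enat (gdist A F x y) \<le> (SUP x\<in>V. SUP y\<in>V. enat (gdist V E x y))"
    by (intro SUP_upper2)
qed

lemma rough_isometry_inclusion:
  fixes \<alpha> \<beta> :: real
  assumes "A \<subseteq> V" and "1 \<le> \<alpha>" and "0 \<le> \<beta>"
    and "\<And>x y. x \<in> A \<Longrightarrow> y \<in> A \<Longrightarrow> gdist A F x y \<le> gdist V E x y"
    and "\<And>x y. x \<in> A \<Longrightarrow> y \<in> A \<Longrightarrow> gdist V E x y \<le> \<alpha> * gdist A F x y"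
    and "\<forall>v\<in>V. \<exists>u\<in>A. gdist V E u v \<le> \<beta>"
  shows "rough_isometry A F V E id \<alpha> \<beta>"
proof -
  have "inverse \<alpha> * gdist A F x y - \<beta> \<le> gdist V E x y" if "x \<in> A" "y \<in> A" for x y
  proof -
    have "inverse \<alpha> * gdist A F x y \<le> gdist A F x y"
      using assms(2) by (intro mult_left_le_one_le) (auto simp: inverse_le_1_iff)
    then show ?thesis
      using assms(3) assms(4)[OF that] by linarith
  qed
  moreover have "gdist V E x y \<le> \<alpha> * gdist A F x y + \<beta>" if "x \<in> A" "y \<in> A" for x y
    using assms(3) assms(5)[OF that] by linarith
  ultimately show ?thesis
    unfolding rough_isometry_def using assms(1,6) by simp
qed

lemma rough_isometry_dist_graph:
  fixes \<alpha> \<beta> :: real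
  assumes "graph V E" and "connected_graph V E" and "A \<subseteq> V" and "A \<noteq> {}"
    and "\<forall>v\<in>V. \<exists>u\<in>A. gdist V E u v \<le> \<rho>" and "2 * \<rho> + 1 \<le> r"
    and "r \<le> \<alpha>" and "\<rho> \<le> \<beta>"
  shows "rough_isometry A (dist_graph V E A r) V E id \<alpha> \<beta>"
proof (rule rough_isometry_inclusion[OF assms(3)])
  note props = dist_graph_if_dense[OF assms(1-6)]
  show "1 \<le> \<alpha>" and "0 \<le> \<beta>"
    using assms(6-8) by linarith+
  show "gdist A (dist_graph V E A r) x y \<le> gdist V E x y" if "x \<in> A" "y \<in> A" for x y
    using props(2)[OF that] .
  show "gdist V E x y \<le> \<alpha> * gdist A (dist_graph V E A r) x y" if "x \<in> A" "y \<in> A" for x y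
  proof -
    have "real (gdist V E x y) \<le> real r * gdist A (dist_graph V E A r) x y"
      using props(3)[OF that] by (metis of_nat_le_iff of_nat_mult)
    also have "\<dots> \<le> \<alpha> * gdist A (dist_graph V E A r) x y"
      using assms(7) by (intro mult_right_mono) auto
    finally show ?thesis .
  qed
  show "\<forall>v\<in>V. \<exists>u\<in>A. gdist V E u v \<le> \<beta>"
    using assms(5,8) by (meson of_nat_le_iff order_trans)
qed

lemma aut_orbit_dist_graph:
  assumes "graph V E" and "connected_graph V E" and "quasitransitive n V E"
    and "max_degree_le V E k" and "x \<in> V"
  defines "A \<equiv> aut_orbit V E x" and "F \<equiv> dist_graph V E (aut_orbit V E x) (2 * n - 1)"
  shows "graph A F \<and> connected_graph A F \<and> vertex_transitive A F \<and>
    max_degree_le A F ((k + 1) ^ (2 * n)) \<and> gdiam A F \<le> gdiam V E \<and>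
    rough_isometry A F V E id (real (2 * n)) (real n)"
proof -
  have "0 < n"
    using quasitransitive_pos[OF assms(3)] assms(5) by blast
  have A: "A \<subseteq> V" "A \<noteq> {}"
    using aut_orbit_subset[OF assms(5)] self_in_aut_orbit[of x V E] unfolding A_def by auto
  have dense: "\<forall>v\<in>V. \<exists>u\<in>A. gdist V E u v \<le> n - 1"
    using aut_orbit_dense[OF assms(1-3,5)] unfolding A_def by metis
  have r: "2 * (n - 1) + 1 \<le> 2 * n - 1"
    using \<open>0 < n\<close> by simp
  have F: "F = dist_graph V E A (2 * n - 1)"
    unfolding F_def A_def ..
  note F_props = dist_graph_if_dense[OF assms(1,2) A dense r, folded F]
  have "rough_isometry A F V E id (real (2 * n)) (real n)"
    unfolding F by (rule rough_isometry_dist_graph[OF assms(1,2) A dense r]) auto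
  moreover have "max_degree_le A F ((k + 1) ^ (2 * n))"
    using max_degree_le_dist_graph[OF assms(2,4) A(1)] unfolding F
    by (rule max_degree_le_mono) (simp add: power_increasing)
  moreover have "vertex_transitive A F"
    unfolding F_def A_def by (rule vertex_transitive_dist_graph_aut_orbit[OF assms(5)])
  moreover have "gdiam A F \<le> gdiam V E"
    using A(1) F_props(2) by (rule gdiam_le_if_gdist_le)
  moreover have "graph A F"
    unfolding F by (rule graph_dist_graph[OF assms(1,2) A(1)])
  ultimately show ?thesis
    using F_props(1) by blast
qed

theorem proposition2p11:
  fixes V :: "'a set" and E :: "'a \<Rightarrow> 'a \<Rightarrow> bool" and n k :: nat
  assumes "graph V E" and "connected_graph V E" and "quasitransitive n V E"
    and "max_degree_le V E k"
  shows "\<exists>(V' :: 'a set) E' \<phi>.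
           graph V' E' \<and> connected_graph V' E' \<and> vertex_transitive V' E' \<and>
           max_degree_le V' E' ((k + 1) ^ (2 * n)) \<and>
           gdiam V' E' \<le> gdiam V E \<and>
           inj_on \<phi> V' \<and>
           rough_isometry V' E' V E \<phi> (real (2 * n)) (real n) \<and>
           (finite V \<longrightarrow> real (card V) / real n \<le> real (card V') \<and> card V' \<le> card V)"
proof -
  have "V \<noteq> {}"
    using assms(2) by (simp add: connected_graph_def)
  then obtain x where x: "x \<in> V"
    and max_card: "\<And>w. w \<in> V \<Longrightarrow> card (aut_orbit V E w) \<le> card (aut_orbit V E x)"
    using exists_aut_orbit_max_card[OF assms(3)] by metis
  have "0 < n"
    using quasitransitive_pos[OF assms(3) \<open>V \<noteq> {}\<close>] .
  have "card V \<le> n * card (aut_orbit V E x)" if "finite V"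
    using card_le_mult_card_aut_orbits[OF that assms(3) max_card] .
  then have "finite V \<longrightarrow>
      real (card V) / real n \<le> real (card (aut_orbit V E x)) \<and> card (aut_orbit V E x) \<le> card V"
    using \<open>0 < n\<close> card_mono[OF _ aut_orbit_subset[OF x]]
    by (auto simp: divide_le_eq mult.commute simp flip: of_nat_mult)
  with aut_orbit_dist_graph[OF assms x] show ?thesis
    by (intro exI[of _ "aut_orbit V E x"] exI[of _ "dist_graph V E (aut_orbit V E x) (2 * n - 1)"]
        exI[of _ id]) simp
qed

end
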